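(* Let $G=(V,E,w)$ be a finite connected weighted simple graph, regarded as a hypergraph all of whose hyperedges have exactly two elements (with hyperedge weights $w_{\{x,y\}}=w(x,y)$). Then for all $x,y\in V$ with $x\ne y$, $\underline\kappa(x,y)=\overline\kappa(x,y)$, and the common value $\kappa(x,y)$ equals the Lin–Lu–Yau curvature $\kappa^{\mathrm{LLY}}(x,y)$.
   Context: Graph setting: $V$ finite, $E$ a set of 2-element subsets of $V$, $w\colon V\times V\to\mathbb{R}_{\ge0}$ symmetric with $w(x,y)>0$ iff $\{x,y\}\in E$ (written $x\sim y$); $G$ connected. Degree $d_x=\sum_y w(x,y)$, $D=\mathrm{diag}(d_x)$; $d(x,y)$ is the graph (path-length) distance. For $0<\alpha<1$ and $x\in V$ let $m_x^\alpha$ be the probability measure $m_x^\alpha(x)=\alpha$, $m_x^\alpha(y)=\frac{1-\alpha}{d_x}w(x,y)$ for $y\sim x$, and $0$ otherwise. $W_1$ is the $L^1$-Wasserstein distance on probability measures on $(V,d)$. $\kappa^\alpha(x,y)=1-W_1(m_x^\alpha,m_y^\alpha)/d(x,y)$ and $\kappa^{\mathrm{LLY}}(x,y)=\lim_{\alpha\uparrow1}\kappa^\alpha(x,y)/(1-\alpha)$ (this limit exists by Lin–Lu–Yau). Hypergraph notions: $\delta_x$ is the indicator of $x$; $\mathbb{R}^V$ carries the inner product $\langle f,g\rangle=\sum_x f(x)g(x)/d_x$ with norm $\|\cdot\|$. For a hyperedge $e$, $B_e=\mathrm{Conv}\{\delta_x-\delta_y : x,y\in e\}$; the hypergraph Laplacian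 is $L(f)=\{\sum_{e}w_e\mathtt{b}_e(\mathtt{b}_e^\top f) : \mathtt{b}_e\in\operatorname{argmax}_{\mathtt b\in B_e}\mathtt b^\top f\}$ (for a graph this is the single matrix $D-A$, $A=(w(x,y))$), and the normalized Laplacian is $\mathcal{L}f=L(D^{-1}f)$. For $\lambda>0$ the resolvent is $J_\lambda=(I+\lambda\mathcal L)^{-1}$. A function $f$ is weighted $1$-Lipschitz if $|f(x)/d_x-f(y)/d_y|\le d(x,y)$ for all $x,y$; $\mathrm{Lip}^1_w(V)$ denotes the set of such functions. $\mathrm{KD}_\lambda(x,y)=\sup\{\langle J_\lambda f,\delta_x-\delta_y\rangle : f\in\mathrm{Lip}^1_w(V)\}$. For $x\ne y$: $\kappa_\lambda(x,y)=1-\mathrm{KD}_\lambda(x,y)/d(x,y)$, $\underline\kappa(x,y)=\liminf_{\lambda\downarrow0}\kappa_\lambda(x,y)/\lambda$, $\overline\kappa(x,y)=\limsup_{\lambda\downarrow0}\kappa_\lambda(x,y)/\lambda$. *)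

theory Defs
  imports "HOL-Analysis.Analysis"
begin

(* Vertex set V = UNIV of a finite type 'a.  Weights w :: 'a => 'a => real. *)

definition weighted_simple_graph :: "('a::finite \<Rightarrow> 'a \<Rightarrow> real) \<Rightarrow> bool" where
  "weighted_simple_graph w \<longleftrightarrow>
     (\<forall>x y. w x y = w y x) \<and> (\<forall>x y. 0 \<le> w x y) \<and> (\<forall>x. w x x = 0)"

definition adj :: "('a \<Rightarrow> 'a \<Rightarrow> real) \<Rightarrow> 'a \<Rightarrow> 'a \<Rightarrow> bool" where
  "adj w x y \<longleftrightarrow> 0 < w x y"

inductive walk :: "('a \<Rightarrow> 'a \<Rightarrow> real) \<Rightarrow> nat \<Rightarrow> 'a \<Rightarrow> 'a \<Rightarrow> bool" for w where
  walk_nil: "walk w 0 x x"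
| walk_cons: "adj w x z \<Longrightarrow> walk w n z y \<Longrightarrow> walk w (Suc n) x y"

definition connected_graph :: "('a \<Rightarrow> 'a \<Rightarrow> real) \<Rightarrow> bool" where
  "connected_graph w \<longleftrightarrow> (\<forall>x y. \<exists>n. walk w n x y)"

definition gdist :: "('a \<Rightarrow> 'a \<Rightarrow> real) \<Rightarrow> 'a \<Rightarrow> 'a \<Rightarrow> real" where
  "gdist w x y = real (LEAST n. walk w n x y)"

definition deg :: "('a::finite \<Rightarrow> 'a \<Rightarrow> real) \<Rightarrow> 'a \<Rightarrow> real" where
  "deg w x = (\<Sum>y\<in>UNIV. w x y)"

definition mlazy :: "('a::finite \<Rightarrow> 'a \<Rightarrow> real) \<Rightarrow> real \<Rightarrow> 'a \<Rightarrow> 'a \<Rightarrow> real" where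
  "mlazy w \<alpha> x z = (if z = x then \<alpha> else (1 - \<alpha>) / deg w x * w x z)"

definition couplings :: "('a::finite \<Rightarrow> real) \<Rightarrow> ('a \<Rightarrow> real) \<Rightarrow> ('a \<Rightarrow> 'a \<Rightarrow> real) set" where
  "couplings \<mu> \<nu> = {\<pi>. (\<forall>u v. 0 \<le> \<pi> u v) \<and> (\<forall>u. (\<Sum>v\<in>UNIV. \<pi> u v) = \<mu> u)
                          \<and> (\<forall>v. (\<Sum>u\<in>UNIV. \<pi> u v) = \<nu> v)}"

definition W1 :: "('a::finite \<Rightarrow> 'a \<Rightarrow> real) \<Rightarrow> ('a \<Rightarrow> real) \<Rightarrow> ('a \<Rightarrow> real) \<Rightarrow> real" where
  "W1 w \<mu> \<nu> = Inf ((\<lambda>\<pi>. \<Sum>u\<in>UNIV. \<Sum>v\<in>UNIV. \<pi> u v * gdist w u v) ` couplings \<mu> \<nu>)"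

definition kappa_alpha :: "('a::finite \<Rightarrow> 'a \<Rightarrow> real) \<Rightarrow> real \<Rightarrow> 'a \<Rightarrow> 'a \<Rightarrow> real" where
  "kappa_alpha w \<alpha> x y = 1 - W1 w (mlazy w \<alpha> x) (mlazy w \<alpha> y) / gdist w x y"

(* Lin-Lu-Yau curvature: the limit alpha -> 1^- of kappa^alpha/(1-alpha)
   (the limit exists by Lin-Lu-Yau) *)
definition kappa_LLY :: "('a::finite \<Rightarrow> 'a \<Rightarrow> real) \<Rightarrow> 'a \<Rightarrow> 'a \<Rightarrow> real" where
  "kappa_LLY w x y = Lim (at_left 1) (\<lambda>\<alpha>. kappa_alpha w \<alpha> x y / (1 - \<alpha>))"

definition indic :: "'a \<Rightarrow> 'a \<Rightarrow> real" ("\<delta>") where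
  "indic x = (\<lambda>z. if z = x then 1 else 0)"

definition winner :: "('a::finite \<Rightarrow> real) \<Rightarrow> ('a \<Rightarrow> real) \<Rightarrow> ('a \<Rightarrow> real) \<Rightarrow> real" where
  "winner d f g = (\<Sum>x\<in>UNIV. f x * g x / d x)"

definition dotp :: "('a::finite \<Rightarrow> real) \<Rightarrow> ('a \<Rightarrow> real) \<Rightarrow> real" where
  "dotp b f = (\<Sum>x\<in>UNIV. b x * f x)"

(* B_e = Conv { delta_x - delta_y : x, y in e }, written as the set of convex
   combinations of the (finitely many) generators *)
definition Bset :: "'a::finite set \<Rightarrow> ('a \<Rightarrow> real) set" where
  "Bset e = {b. \<exists>c. (\<forall>p q. 0 \<le> c p q) \<and> (\<Sum>p\<in>e. \<Sum>q\<in>e. c p q) = 1 \<and>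
                  b = (\<lambda>z. \<Sum>p\<in>e. \<Sum>q\<in>e. c p q * (\<delta> p z - \<delta> q z))}"

definition hyp_laplacian :: "'a set set \<Rightarrow> ('a set \<Rightarrow> real) \<Rightarrow> ('a::finite \<Rightarrow> real) \<Rightarrow> ('a \<Rightarrow> real) set" where
  "hyp_laplacian H we f =
     {g. \<exists>b. (\<forall>e\<in>H. b e \<in> Bset e \<and> (\<forall>b'\<in>Bset e. dotp b' f \<le> dotp (b e) f)) \<and>
            g = (\<lambda>z. \<Sum>e\<in>H. we e * b e z * dotp (b e) f)}"

definition norm_laplacian :: "'a set set \<Rightarrow> ('a set \<Rightarrow> real) \<Rightarrow> ('a \<Rightarrow> real) \<Rightarrow> ('a::finite \<Rightarrow> real) \<Rightarrow> ('a \<Rightarrow> real) set" where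
  "norm_laplacian H we d f = hyp_laplacian H we (\<lambda>x. f x / d x)"

(* resolvent J_lambda = (I + lambda \<L>)^{-1}:  J_lambda f is the u with f \<in> u + lambda \<L> u *)
definition resolvent :: "'a set set \<Rightarrow> ('a set \<Rightarrow> real) \<Rightarrow> ('a \<Rightarrow> real) \<Rightarrow> real \<Rightarrow> ('a::finite \<Rightarrow> real) \<Rightarrow> ('a \<Rightarrow> real)" where
  "resolvent H we d lam f = (THE u. \<exists>g\<in>norm_laplacian H we d u. f = (\<lambda>z. u z + lam * g z))"

definition Lip1w :: "('a::finite \<Rightarrow> 'a \<Rightarrow> real) \<Rightarrow> ('a \<Rightarrow> real) set" where
  "Lip1w w = {f. \<forall>x y. \<bar>f x / deg w x - f y / deg w y\<bar> \<le> gdist w x y}"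

definition graph_hyperedges :: "('a \<Rightarrow> 'a \<Rightarrow> real) \<Rightarrow> 'a set set" where
  "graph_hyperedges w = {{x, y} | x y. adj w x y}"

definition graph_hweight :: "('a \<Rightarrow> 'a \<Rightarrow> real) \<Rightarrow> 'a set \<Rightarrow> real" where
  "graph_hweight w e = (SOME c. \<exists>x y. e = {x, y} \<and> x \<noteq> y \<and> c = w x y)"

definition graph_resolvent :: "('a::finite \<Rightarrow> 'a \<Rightarrow> real) \<Rightarrow> real \<Rightarrow> ('a \<Rightarrow> real) \<Rightarrow> ('a \<Rightarrow> real)" where
  "graph_resolvent w lam = resolvent (graph_hyperedges w) (graph_hweight w) (deg w) lam"

definition KD :: "('a::finite \<Rightarrow> 'a \<Rightarrow> real) \<Rightarrow> real \<Rightarrow> 'a \<Rightarrow> 'a \<Rightarrow> real" where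
  "KD w lam x y = Sup ((\<lambda>f. winner (deg w) (graph_resolvent w lam f) (\<delta> x - \<delta> y)) ` Lip1w w)"

definition kappa_lambda :: "('a::finite \<Rightarrow> 'a \<Rightarrow> real) \<Rightarrow> real \<Rightarrow> 'a \<Rightarrow> 'a \<Rightarrow> real" where
  "kappa_lambda w lam x y = 1 - KD w lam x y / gdist w x y"

definition kappa_lower :: "('a::finite \<Rightarrow> 'a \<Rightarrow> real) \<Rightarrow> 'a \<Rightarrow> 'a \<Rightarrow> ereal" where
  "kappa_lower w x y = Liminf (at_right 0) (\<lambda>lam. ereal (kappa_lambda w lam x y / lam))"

definition kappa_upper :: "('a::finite \<Rightarrow> 'a \<Rightarrow> real) \<Rightarrow> 'a \<Rightarrow> 'a \<Rightarrow> ereal" where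
  "kappa_upper w x y = Limsup (at_right 0) (\<lambda>lam. ereal (kappa_lambda w lam x y / lam))"

end

theory Submission
  imports Defs
begin

text \<open>For a graph, every two-point hyperedge \<open>{p, q}\<close> has essentially one maximizer of
  \<open>b\<^sup>T f\<close>, so the hypergraph Laplacian is the graph Laplacian \<open>D - A\<close> and the resolvent
  \<open>J\<^sub>\<lambda>\<close> is conjugate under \<open>D\<close> to \<open>(I + \<lambda>(I - P))\<^sup>-\<^sup>1\<close>, \<open>P = D\<^sup>-\<^sup>1 A\<close> the random walk.
  By Kantorovich duality both \<open>W\<^sub>1(m\<^sub>x\<^sup>\<alpha>, m\<^sub>y\<^sup>\<alpha>)\<close> and \<open>KD\<^sub>\<lambda>(x, y)\<close> are suprema over
  \<open>1\<close>-Lipschitz \<open>g\<close>, of \<open>\<alpha>(g x - g y) + (1 - \<alpha>)(P g x - P g y)\<close> and of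
  \<open>(I + \<lambda>(I - P))\<^sup>-\<^sup>1 g\<close> evaluated between \<open>x\<close> and \<open>y\<close>. The expansion
  \<open>(I + \<lambda>(I - P))\<^sup>-\<^sup>1 = I - \<lambda>(I - P) + O(\<lambda>\<^sup>2)\<close>, uniform on Lipschitz functions vanishing at
  \<open>x\<close>, gives \<open>KD\<^sub>\<lambda> = W\<^sub>1(m\<^sub>x\<^sup>1\<^sup>-\<^sup>\<lambda>, m\<^sub>y\<^sup>1\<^sup>-\<^sup>\<lambda>) + O(\<lambda>\<^sup>2)\<close>, i.e.
  \<open>\<kappa>\<^sub>\<lambda>/\<lambda> = \<kappa>\<^sup>1\<^sup>-\<^sup>\<lambda>/\<lambda> + O(\<lambda>)\<close>. Finally \<open>\<kappa>\<^sup>\<alpha>/(1 - \<alpha>)\<close> is nondecreasing and bounded in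
  \<open>\<alpha>\<close>, because \<open>m\<^sub>x\<^sup>\<beta>\<close> is a mixture of \<open>m\<^sub>x\<^sup>\<alpha>\<close> and \<open>\<delta>\<^sub>x\<close> for \<open>\<alpha> \<le> \<beta>\<close>; so it converges to its
  supremum as \<open>\<alpha>\<close> tends to \<open>1\<close> from below, and both one-sided limits of \<open>\<kappa>\<^sub>\<lambda>/\<lambda>\<close> equal it.\<close>

section \<open>Graph distance\<close>

lemma walk_append: "walk w n a b \<Longrightarrow> walk w m b c \<Longrightarrow> walk w (n + m) a c"
  by (induction rule: walk.induct) (auto intro: walk.intros)

lemma walk_snoc: "walk w n a b \<Longrightarrow> adj w b c \<Longrightarrow> walk w (Suc n) a c"
  by (induction rule: walk.induct) (auto intro: walk.intros)

lemma walk_0_eq: "walk w 0 a b \<Longrightarrow> a = b"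
  by (auto elim: walk.cases)

locale connected_weighted_graph =
  fixes w :: "'a::finite \<Rightarrow> 'a \<Rightarrow> real"
  assumes simple: "weighted_simple_graph w"
    and connected: "connected_graph w"
    and nontrivial: "\<exists>a b::'a. a \<noteq> b"
begin

lemma weight_commute: "w a b = w b a"
  and weight_nonneg: "0 \<le> w a b"
  and weight_self: "w a a = 0"
  using simple unfolding weighted_simple_graph_def by auto

lemma adj_commute: "adj w a b \<Longrightarrow> adj w b a"
  unfolding adj_def using weight_commute by simp

lemma adj_neq: "adj w a b \<Longrightarrow> a \<noteq> b"
  unfolding adj_def using weight_self by auto

lemma walk_rev: "walk w n a b \<Longrightarrow> walk w n b a"
proof (induction rule: walk.induct)
  case (walk_nil x)
  then show ?case by (rule walk.intros)
next
  case (walk_cons x z n y)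
  then show ?case by (auto intro: walk_snoc adj_commute)
qed

lemma walk_gdist: "walk w (LEAST n. walk w n a b) a b"
  using connected unfolding connected_graph_def by (meson LeastI_ex)

lemma gdist_le_walk: "walk w n a b \<Longrightarrow> gdist w a b \<le> n"
  unfolding gdist_def by (simp add: Least_le)

lemma gdist_nonneg: "0 \<le> gdist w a b"
  unfolding gdist_def by simp

lemma gdist_self: "gdist w a a = 0"
  using gdist_le_walk[OF walk_nil, of a] gdist_nonneg[of a a] by simp

lemma gdist_commute: "gdist w a b = gdist w b a"
proof -
  have "walk w n a b \<longleftrightarrow> walk w n b a" for n
    using walk_rev by blast
  then show ?thesis unfolding gdist_def by simp
qed

lemma gdist_triangle: "gdist w a c \<le> gdist w a b + gdist w b c"
  using gdist_le_walk[OF walk_append[OF walk_gdist walk_gdist]]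
  by (simp add: gdist_def)

lemma gdist_ge_1: "a \<noteq> b \<Longrightarrow> 1 \<le> gdist w a b"
  using walk_gdist[of a b] walk_0_eq unfolding gdist_def
  by (metis One_nat_def less_one not_le of_nat_1 of_nat_le_iff)

lemma deg_pos: "0 < deg w a"
proof -
  obtain b where ab: "b \<noteq> a" using nontrivial by (metis (full_types))
  obtain n where "walk w n a b"
    using connected unfolding connected_graph_def by blast
  then obtain z where "adj w a z"
    by (cases rule: walk.cases) (use ab in auto)
  then have "0 < w a z" unfolding adj_def .
  also have "w a z \<le> deg w a" unfolding deg_def
    by (rule member_le_sum) (auto simp: weight_nonneg)
  finally show ?thesis .
qed

lemma deg_neq_0: "deg w a \<noteq> 0"
  using deg_pos[of a] by simp

end

section \<open>Kantorovich duality\<close>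

definition Lip1 :: "('a::finite \<Rightarrow> 'a \<Rightarrow> real) \<Rightarrow> ('a \<Rightarrow> real) set" where
  "Lip1 w = {g. \<forall>u v. \<bar>g u - g v\<bar> \<le> gdist w u v}"

definition transport_cost :: "('a::finite \<Rightarrow> 'a \<Rightarrow> real) \<Rightarrow> ('a \<Rightarrow> 'a \<Rightarrow> real) \<Rightarrow> real" where
  "transport_cost w \<pi> = (\<Sum>u\<in>UNIV. \<Sum>v\<in>UNIV. \<pi> u v * gdist w u v)"

definition pairing :: "('a::finite \<Rightarrow> real) \<Rightarrow> ('a \<Rightarrow> real) \<Rightarrow> ('a \<Rightarrow> real) \<Rightarrow> real" where
  "pairing g \<mu> \<nu> = (\<Sum>z\<in>UNIV. g z * (\<mu> z - \<nu> z))"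

lemma sum_indic_mult:
  fixes u :: "'a::finite"
  shows "(\<Sum>z\<in>UNIV. \<delta> u z * f z) = (f u :: real)"
  unfolding indic_def by (simp add: if_distrib[where f="\<lambda>x. x * _"] cong: if_cong)

lemma sum_mult_indic:
  fixes u :: "'a::finite"
  shows "(\<Sum>z\<in>UNIV. f z * \<delta> u z) = (f u :: real)"
  unfolding indic_def by (simp add: if_distrib[where f="\<lambda>x. _ * x"] cong: if_cong)

lemma sum_indic:
  fixes u :: "'a::finite"
  shows "(\<Sum>z\<in>UNIV. \<delta> u z) = (1::real)"
  unfolding indic_def by simp

definition plan_marginals :: "('a::finite \<Rightarrow> 'a \<Rightarrow> real) \<Rightarrow> ((real^'a) \<times> (real^'a) \<times> real) set" where
  "plan_marginals w =
     {((\<chi> u. \<Sum>v\<in>UNIV. \<pi> u v), (\<chi> v. \<Sum>u\<in>UNIV. \<pi> u v), transport_cost w \<pi>) | \<pi>. \<forall>u v. 0 \<le> \<pi> u v}"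

lemma W1_eq_Inf_transport_cost: "W1 w \<mu> \<nu> = Inf (transport_cost w ` couplings \<mu> \<nu>)"
  unfolding W1_def transport_cost_def by simp

lemma coupling_sum_marginals:
  assumes "\<pi> \<in> couplings \<mu> \<nu>"
  shows "(\<Sum>u\<in>UNIV. \<Sum>v\<in>UNIV. \<pi> u v * (f u + g v)) = (\<Sum>u\<in>UNIV. f u * \<mu> u) + (\<Sum>v\<in>UNIV. g v * \<nu> v)"
proof -
  have \<mu>: "\<mu> u = (\<Sum>v\<in>UNIV. \<pi> u v)" and \<nu>: "\<nu> v = (\<Sum>u\<in>UNIV. \<pi> u v)" for u v
    using assms unfolding couplings_def by auto
  have "(\<Sum>u\<in>UNIV. \<Sum>v\<in>UNIV. \<pi> u v * g v) = (\<Sum>v\<in>UNIV. \<Sum>u\<in>UNIV. \<pi> u v * g v)"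
    by (rule sum.swap)
  then show ?thesis
    by (simp add: \<mu> \<nu> distrib_left sum.distrib sum_distrib_left sum_distrib_right mult.commute)
qed

lemma product_coupling:
  assumes "\<And>z. 0 \<le> \<mu> z" "\<And>z. 0 \<le> \<nu> z" "sum \<mu> UNIV = 1" "sum \<nu> UNIV = 1"
  shows "(\<lambda>u v. \<mu> u * \<nu> v) \<in> couplings \<mu> \<nu>"
  using assms unfolding couplings_def
  by (auto simp: sum_distrib_left[symmetric] sum_distrib_right[symmetric])

lemma convex_plan_marginals: "convex (plan_marginals w)"
  unfolding convex_def
proof (intro ballI allI impI)
  fix p1 p2 and a b :: real
  assume "p1 \<in> plan_marginals w" "p2 \<in> plan_marginals w" and ab: "0 \<le> a" "0 \<le> b" "a + b = 1"
  then obtain \<pi>1 \<pi>2 where \<pi>: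
      "\<forall>u v. 0 \<le> \<pi>1 u v" "\<forall>u v. 0 \<le> \<pi>2 u v"
      "p1 = ((\<chi> u. \<Sum>v\<in>UNIV. \<pi>1 u v), (\<chi> v. \<Sum>u\<in>UNIV. \<pi>1 u v), transport_cost w \<pi>1)"
      "p2 = ((\<chi> u. \<Sum>v\<in>UNIV. \<pi>2 u v), (\<chi> v. \<Sum>u\<in>UNIV. \<pi>2 u v), transport_cost w \<pi>2)"
    unfolding plan_marginals_def by blast
  define \<pi> where "\<pi> = (\<lambda>u v. a * \<pi>1 u v + b * \<pi>2 u v)"
  have "\<forall>u v. 0 \<le> \<pi> u v"
    unfolding \<pi>_def using \<pi> ab by simp
  moreover have "a *\<^sub>R p1 + b *\<^sub>R p2
      = ((\<chi> u. \<Sum>v\<in>UNIV. \<pi> u v), (\<chi> v. \<Sum>u\<in>UNIV. \<pi> u v), transport_cost w \<pi>)"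
    unfolding \<pi>(3,4) \<pi>_def transport_cost_def
    by (simp add: vec_eq_iff sum.distrib sum_distrib_left distrib_right mult.assoc)
  ultimately show "a *\<^sub>R p1 + b *\<^sub>R p2 \<in> plan_marginals w"
    unfolding plan_marginals_def by blast
qed

lemma dirac_plan_marginals:
  "((\<chi> z. \<delta> u z), (\<chi> z. \<delta> v z), gdist w u v) \<in> plan_marginals w"
proof -
  define \<pi> where "\<pi> = (\<lambda>a b. \<delta> u a * \<delta> v b)"
  have "(\<chi> z. \<delta> u z) = (\<chi> a. \<Sum>b\<in>UNIV. \<pi> a b)" "(\<chi> z. \<delta> v z) = (\<chi> b. \<Sum>a\<in>UNIV. \<pi> a b)"
    "gdist w u v = transport_cost w \<pi>"
    unfolding \<pi>_def transport_cost_def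
    by (simp_all add: sum_distrib_left[symmetric] sum_distrib_right[symmetric] mult.assoc
        sum_indic sum_indic_mult)
  moreover have "\<forall>a b. 0 \<le> \<pi> a b"
    unfolding \<pi>_def indic_def by simp
  ultimately show ?thesis
    unfolding plan_marginals_def by blast
qed

lemma Lip1_zero: "(\<lambda>_. 0) \<in> Lip1 w"
  unfolding Lip1_def gdist_def by simp

lemma Lip1_le: "g \<in> Lip1 w \<Longrightarrow> g u - g v \<le> gdist w u v"
  unfolding Lip1_def by (metis (mono_tags) abs_le_D1 mem_Collect_eq)

lemma abs_Sup_image_diff_le:
  fixes \<phi> \<psi> :: "'b \<Rightarrow> real"
  assumes ne: "A \<noteq> {}" and close: "\<And>g. g \<in> A \<Longrightarrow> \<bar>\<phi> g - \<psi> g\<bar> \<le> e"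
    and bdd: "bdd_above (\<psi> ` A)"
  shows "\<bar>Sup (\<phi> ` A) - Sup (\<psi> ` A)\<bar> \<le> e"
proof -
  have \<psi>_le: "\<psi> g \<le> Sup (\<psi> ` A)" if "g \<in> A" for g
    using bdd that by (intro cSup_upper) auto
  have bdd\<phi>: "bdd_above (\<phi> ` A)"
    using close \<psi>_le by (intro bdd_aboveI[of _ "Sup (\<psi> ` A) + e"]) (force simp: abs_le_iff)
  have \<phi>_le: "\<phi> g \<le> Sup (\<phi> ` A)" if "g \<in> A" for g
    using bdd\<phi> that by (intro cSup_upper) auto
  have "Sup (\<phi> ` A) \<le> Sup (\<psi> ` A) + e"
    using ne close \<psi>_le by (intro cSup_least) (force simp: abs_le_iff)+
  moreover have "Sup (\<psi> ` A) \<le> Sup (\<phi> ` A) + e"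
    using ne close \<phi>_le by (intro cSup_least) (force simp: abs_le_iff)+
  ultimately show ?thesis
    by (simp add: abs_le_iff)
qed

context connected_weighted_graph
begin

lemma transport_cost_nonneg: "(\<And>u v. 0 \<le> \<pi> u v) \<Longrightarrow> 0 \<le> transport_cost w \<pi>"
  unfolding transport_cost_def by (intro sum_nonneg mult_nonneg_nonneg gdist_nonneg)

lemma W1_le_transport_cost:
  assumes "\<pi> \<in> couplings \<mu> \<nu>"
  shows "W1 w \<mu> \<nu> \<le> transport_cost w \<pi>"
  unfolding W1_eq_Inf_transport_cost
proof (rule cInf_lower)
  show "transport_cost w \<pi> \<in> transport_cost w ` couplings \<mu> \<nu>"
    using assms by blast
  show "bdd_below (transport_cost w ` couplings \<mu> \<nu>)"
    by (rule bdd_belowI[of _ 0]) (auto simp: couplings_def intro!: transport_cost_nonneg)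
qed

lemma pairing_le_transport_cost:
  assumes \<pi>: "\<pi> \<in> couplings \<mu> \<nu>" and g: "g \<in> Lip1 w"
  shows "pairing g \<mu> \<nu> \<le> transport_cost w \<pi>"
proof -
  have "pairing g \<mu> \<nu> = (\<Sum>u\<in>UNIV. \<Sum>v\<in>UNIV. \<pi> u v * (g u + - g v))"
    unfolding coupling_sum_marginals[OF \<pi>] pairing_def
    by (simp add: right_diff_distrib sum_subtractf sum_negf)
  also have "\<dots> \<le> transport_cost w \<pi>"
    unfolding transport_cost_def using \<pi> Lip1_le[OF g]
    by (intro sum_mono mult_left_mono) (auto simp: couplings_def)
  finally show ?thesis .
qed

lemma pairing_le_W1:
  assumes "\<And>z. 0 \<le> \<mu> z" "\<And>z. 0 \<le> \<nu> z" "sum \<mu> UNIV = 1" "sum \<nu> UNIV = 1" "g \<in> Lip1 w"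
  shows "pairing g \<mu> \<nu> \<le> W1 w \<mu> \<nu>"
  unfolding W1_eq_Inf_transport_cost
proof (rule cInf_greatest)
  show "transport_cost w ` couplings \<mu> \<nu> \<noteq> {}"
    using product_coupling[OF assms(1-4)] by blast
  show "\<And>c. c \<in> transport_cost w ` couplings \<mu> \<nu> \<Longrightarrow> pairing g \<mu> \<nu> \<le> c"
    using pairing_le_transport_cost assms(5) by blast
qed

text \<open>A value below \<open>W1\<close> lies outside the convex hull of the Dirac plans, which is a compact
  polytope; a separating hyperplane provides a strictly feasible pair of dual potentials.\<close>

lemma W1_separating_hyperplane:
  assumes "c < W1 w \<mu> \<nu>"
  obtains a1 a2 :: "real^'a" and t b :: real
  where "\<And>u v. b < a1$u + a2$v + t * gdist w u v"
    and "(\<Sum>u\<in>UNIV. a1$u * \<mu> u) + (\<Sum>v\<in>UNIV. a2$v * \<nu> v) + t * c < b"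
proof -
  define S where "S = (\<lambda>(u, v). ((\<chi> z. \<delta> u z), (\<chi> z. \<delta> v z), gdist w u v)) ` UNIV"
  have "convex hull S \<subseteq> plan_marginals w"
    by (rule hull_minimal) (auto simp: S_def dirac_plan_marginals convex_plan_marginals)
  moreover have "((\<chi> u. \<mu> u), (\<chi> v. \<nu> v), c) \<notin> plan_marginals w"
  proof
    assume "((\<chi> u. \<mu> u), (\<chi> v. \<nu> v), c) \<in> plan_marginals w"
    then obtain \<pi> where "\<forall>u v. 0 \<le> \<pi> u v" "\<forall>u. \<mu> u = (\<Sum>v\<in>UNIV. \<pi> u v)"
      "\<forall>v. \<nu> v = (\<Sum>u\<in>UNIV. \<pi> u v)" "c = transport_cost w \<pi>"
      unfolding plan_marginals_def by (auto simp: vec_eq_iff)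
    then have "W1 w \<mu> \<nu> \<le> c"
      using W1_le_transport_cost[of \<pi>] unfolding couplings_def by auto
    with assms show False by simp
  qed
  ultimately have "((\<chi> u. \<mu> u), (\<chi> v. \<nu> v), c) \<notin> convex hull S"
    by blast
  moreover have "compact (convex hull S)"
    by (rule compact_convex_hull, rule finite_imp_compact) (simp add: S_def)
  ultimately obtain a b where
    "inner a ((\<chi> u. \<mu> u), (\<chi> v. \<nu> v), c) < b" "\<forall>p\<in>convex hull S. b < inner a p"
    using separating_hyperplane_closed_point[OF convex_convex_hull compact_imp_closed] by blast
  moreover obtain a1 a2 t where a: "a = (a1, a2, t)"
    by (cases a) auto
  moreover have "((\<chi> z. \<delta> u z), (\<chi> z. \<delta> v z), gdist w u v) \<in> convex hull S" for u v
    by (rule hull_inc) (auto simp: S_def)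
  ultimately have "b < inner (a1, a2, t) ((\<chi> z. \<delta> u z), (\<chi> z. \<delta> v z), gdist w u v)"
    and "inner (a1, a2, t) ((\<chi> u. \<mu> u), (\<chi> v. \<nu> v), c) < b" for u v
    by blast+
  then show ?thesis
    by (intro that[of b a1 a2 t]) (simp_all add: inner_vec_def sum_mult_indic add.assoc)
qed

lemma W1_dual_potentials:
  assumes \<mu>: "\<And>z. 0 \<le> \<mu> z" "sum \<mu> UNIV = 1" and \<nu>: "\<And>z. 0 \<le> \<nu> z" "sum \<nu> UNIV = 1"
    and c: "c < W1 w \<mu> \<nu>"
  obtains p q where "\<And>u v. p u + q v \<le> gdist w u v"
    and "c < (\<Sum>u\<in>UNIV. p u * \<mu> u) + (\<Sum>v\<in>UNIV. q v * \<nu> v)"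
proof -
  obtain b and a1 a2 :: "real^'a" and t where
    gen: "\<And>u v. b < a1$u + a2$v + t * gdist w u v" and
    sep: "(\<Sum>u\<in>UNIV. a1$u * \<mu> u) + (\<Sum>v\<in>UNIV. a2$v * \<nu> v) + t * c < b"
    by (rule W1_separating_hyperplane[OF c]) (rule that)
  define A where "A = (\<Sum>u\<in>UNIV. a1$u * \<mu> u) + (\<Sum>v\<in>UNIV. a2$v * \<nu> v)"
  define \<pi> where "\<pi> = (\<lambda>u v. \<mu> u * \<nu> v)"
  have \<pi>: "\<pi> \<in> couplings \<mu> \<nu>"
    unfolding \<pi>_def by (rule product_coupling[OF \<mu>(1) \<nu>(1) \<mu>(2) \<nu>(2)])
  have "b = (\<Sum>u\<in>UNIV. \<Sum>v\<in>UNIV. \<pi> u v * (b + 0))"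
    using coupling_sum_marginals[OF \<pi>, of "\<lambda>_. b" "\<lambda>_. 0"] \<mu>(2)
    by (simp add: sum_distrib_left[symmetric])
  also have "\<dots> \<le> (\<Sum>u\<in>UNIV. \<Sum>v\<in>UNIV. \<pi> u v * ((a1$u + a2$v) + t * gdist w u v))"
    using gen \<mu>(1) \<nu>(1) unfolding \<pi>_def
    by (intro sum_mono mult_left_mono) (auto simp: add.assoc less_imp_le)
  also have "\<dots> = (\<Sum>u\<in>UNIV. \<Sum>v\<in>UNIV. \<pi> u v * (a1$u + a2$v)) + t * transport_cost w \<pi>"
    unfolding transport_cost_def by (simp add: distrib_left sum.distrib sum_distrib_left mult.left_commute)
  also have "\<dots> = A + t * transport_cost w \<pi>"
    unfolding A_def coupling_sum_marginals[OF \<pi>] ..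
  finally have "b \<le> A + t * transport_cost w \<pi>" .
  moreover have "c < transport_cost w \<pi>"
    using c W1_le_transport_cost[OF \<pi>] by simp
  ultimately have "t * c < t * transport_cost w \<pi>" "c < transport_cost w \<pi>"
    using sep unfolding A_def by linarith+
  then have t: "0 < t"
    by (auto simp: mult_less_cancel_left)
  show ?thesis
  proof (rule that[of "\<lambda>u. - a1$u / t" "\<lambda>v. (b - a2$v) / t"])
    show "- a1$u / t + (b - a2$v) / t \<le> gdist w u v" for u v
    proof -
      have "- a1$u / t + (b - a2$v) / t = (b - a1$u - a2$v) / t"
        by (simp add: diff_divide_distrib)
      also have "\<dots> \<le> gdist w u v"
        using gen[of u v] t by (simp add: pos_divide_le_eq mult.commute)
      finally show ?thesis .
    qed
    have "(\<Sum>u\<in>UNIV. - a1$u / t * \<mu> u) = - (\<Sum>u\<in>UNIV. a1$u * \<mu> u) / t"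
      by (simp add: sum_divide_distrib sum_negf)
    moreover have "(\<Sum>v\<in>UNIV. (b - a2$v) / t * \<nu> v) = (b - (\<Sum>v\<in>UNIV. a2$v * \<nu> v)) / t"
      using \<nu>(2) by (simp add: sum_divide_distrib[symmetric] left_diff_distrib sum_subtractf
          sum_distrib_left[symmetric] diff_divide_distrib)
    moreover have "c < (b - A) / t"
      using sep t unfolding A_def by (simp add: less_divide_eq mult.commute)
    ultimately show "c < (\<Sum>u\<in>UNIV. - a1$u / t * \<mu> u) + (\<Sum>v\<in>UNIV. (b - a2$v) / t * \<nu> v)"
      unfolding A_def by (simp add: add_divide_distrib diff_divide_distrib)
  qed
qed

text \<open>The \<open>c\<close>-transform of a dual potential is \<open>1\<close>-Lipschitz and does at least as well.\<close>

lemma Lip1_from_potentials: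
  assumes pq: "\<And>u v. p u + q v \<le> gdist w u v" and \<mu>: "\<And>z. 0 \<le> \<mu> z" and \<nu>: "\<And>z. 0 \<le> \<nu> z"
  obtains g where "g \<in> Lip1 w"
    and "(\<Sum>u\<in>UNIV. p u * \<mu> u) + (\<Sum>v\<in>UNIV. q v * \<nu> v) \<le> pairing g \<mu> \<nu>"
proof -
  define g where "g u = Min (range (\<lambda>v. gdist w u v - q v))" for u
  have g_le: "g u \<le> gdist w u v - q v" for u v
    unfolding g_def by (rule Min_le) auto
  have g_attained: "\<exists>v. g u = gdist w u v - q v" for u
  proof -
    have "g u \<in> range (\<lambda>v. gdist w u v - q v)"
      unfolding g_def by (rule Min_in) auto
    then show ?thesis by auto
  qed
  have g_diff: "g u - g u' \<le> gdist w u u'" for u u'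
  proof -
    obtain v where v: "g u' = gdist w u' v - q v"
      using g_attained by blast
    show ?thesis
      using g_le[of u v] gdist_triangle[of u v u'] v by simp
  qed
  have "g \<in> Lip1 w"
    unfolding Lip1_def
  proof (intro CollectI allI)
    fix u u'
    show "\<bar>g u - g u'\<bar> \<le> gdist w u u'"
      using g_diff[of u u'] g_diff[of u' u] gdist_commute[of u' u] unfolding abs_le_iff by linarith
  qed
  moreover have "(\<Sum>u\<in>UNIV. p u * \<mu> u) \<le> (\<Sum>u\<in>UNIV. g u * \<mu> u)"
  proof (intro sum_mono mult_right_mono \<mu>)
    fix u
    obtain v where "g u = gdist w u v - q v"
      using g_attained by blast
    then show "p u \<le> g u"
      using pq[of u v] by simp
  qed
  moreover have "(\<Sum>v\<in>UNIV. q v * \<nu> v) \<le> (\<Sum>v\<in>UNIV. - g v * \<nu> v)"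
  proof (intro sum_mono mult_right_mono \<nu>)
    fix v
    show "q v \<le> - g v"
      using g_le[of v v] gdist_self[of v] by linarith
  qed
  ultimately show ?thesis
    by (intro that[of g]) (simp_all add: pairing_def right_diff_distrib sum_subtractf sum_negf)
qed

lemma W1_eq_Sup_pairing:
  assumes "\<And>z. 0 \<le> \<mu> z" "\<And>z. 0 \<le> \<nu> z" "sum \<mu> UNIV = 1" "sum \<nu> UNIV = 1"
  shows "W1 w \<mu> \<nu> = Sup ((\<lambda>g. pairing g \<mu> \<nu>) ` Lip1 w)"
proof (rule antisym)
  have ne: "(\<lambda>g. pairing g \<mu> \<nu>) ` Lip1 w \<noteq> {}"
    using Lip1_zero by blast
  have bdd: "bdd_above ((\<lambda>g. pairing g \<mu> \<nu>) ` Lip1 w)"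
    using pairing_le_W1[OF assms] by (intro bdd_aboveI[of _ "W1 w \<mu> \<nu>"]) blast
  show "Sup ((\<lambda>g. pairing g \<mu> \<nu>) ` Lip1 w) \<le> W1 w \<mu> \<nu>"
    using pairing_le_W1[OF assms] by (intro cSup_least[OF ne]) blast
  show "W1 w \<mu> \<nu> \<le> Sup ((\<lambda>g. pairing g \<mu> \<nu>) ` Lip1 w)"
  proof (rule field_le_epsilon)
    fix e :: real
    assume "0 < e"
    then obtain p q where "\<And>u v. p u + q v \<le> gdist w u v"
        "W1 w \<mu> \<nu> - e < (\<Sum>u\<in>UNIV. p u * \<mu> u) + (\<Sum>v\<in>UNIV. q v * \<nu> v)"
      using W1_dual_potentials[of \<mu> \<nu> "W1 w \<mu> \<nu> - e"] assms by auto
    moreover obtain g where "g \<in> Lip1 w"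
      "(\<Sum>u\<in>UNIV. p u * \<mu> u) + (\<Sum>v\<in>UNIV. q v * \<nu> v) \<le> pairing g \<mu> \<nu>"
      using Lip1_from_potentials[of p q \<mu> \<nu>] calculation(1) assms(1,2) by blast
    moreover have "pairing g \<mu> \<nu> \<le> Sup ((\<lambda>g. pairing g \<mu> \<nu>) ` Lip1 w)"
      using \<open>g \<in> Lip1 w\<close> by (intro cSup_upper[OF _ bdd]) blast
    ultimately show "W1 w \<mu> \<nu> \<le> Sup ((\<lambda>g. pairing g \<mu> \<nu>) ` Lip1 w) + e"
      by linarith
  qed
qed

end

section \<open>The hypergraph Laplacian of a graph\<close>

lemma dotp_segment:
  fixes p q :: "'a::finite"
  shows "dotp (\<lambda>z. s * (\<delta> p z - \<delta> q z)) f = s * (f p - f q)"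
  unfolding dotp_def
  by (simp add: algebra_simps sum_subtractf sum_distrib_left[symmetric] sum_mult_indic)

lemma Bset_doubleton:
  fixes p q :: "'a::finite"
  assumes pq: "p \<noteq> q"
  shows "b \<in> Bset {p, q} \<longleftrightarrow> (\<exists>s. \<bar>s\<bar> \<le> 1 \<and> b = (\<lambda>z. s * (\<delta> p z - \<delta> q z)))"
proof
  assume "b \<in> Bset {p, q}"
  then obtain c where c: "\<forall>p q. 0 \<le> c p q" "(\<Sum>p'\<in>{p, q}. \<Sum>q'\<in>{p, q}. c p' q') = 1"
    and b: "b = (\<lambda>z. \<Sum>p'\<in>{p, q}. \<Sum>q'\<in>{p, q}. c p' q' * (\<delta> p' z - \<delta> q' z))"
    unfolding Bset_def by blast
  have "c p p + c p q + c q p + c q q = 1"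
    using c(2) pq by simp
  then have "\<bar>c p q - c q p\<bar> \<le> 1"
    using c(1) by (smt (verit))
  moreover have "b = (\<lambda>z. (c p q - c q p) * (\<delta> p z - \<delta> q z))"
    unfolding b using pq by (simp add: algebra_simps)
  ultimately show "\<exists>s. \<bar>s\<bar> \<le> 1 \<and> b = (\<lambda>z. s * (\<delta> p z - \<delta> q z))"
    by blast
next
  assume "\<exists>s. \<bar>s\<bar> \<le> 1 \<and> b = (\<lambda>z. s * (\<delta> p z - \<delta> q z))"
  then obtain s where s: "\<bar>s\<bar> \<le> 1" and b: "b = (\<lambda>z. s * (\<delta> p z - \<delta> q z))"
    by blast
  define c where
    "c a a' = (if a = p \<and> a' = q then (1 + s) / 2 else if a = q \<and> a' = p then (1 - s) / 2 else 0)"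
    for a a'
  have "\<forall>p q. 0 \<le> c p q"
    unfolding c_def using s by auto
  moreover have "(\<Sum>p'\<in>{p, q}. \<Sum>q'\<in>{p, q}. c p' q') = 1"
    unfolding c_def using pq by (simp add: field_simps)
  moreover have "b = (\<lambda>z. \<Sum>p'\<in>{p, q}. \<Sum>q'\<in>{p, q}. c p' q' * (\<delta> p' z - \<delta> q' z))"
    unfolding b c_def using pq by (simp add: algebra_simps add_divide_distrib diff_divide_distrib)
  ultimately show "b \<in> Bset {p, q}"
    unfolding Bset_def by blast
qed

lemma sgn_segment_in_Bset:
  fixes p q :: "'a::finite"
  assumes "p \<noteq> q"
  shows "(\<lambda>z. sgn (f p - f q) * (\<delta> p z - \<delta> q z)) \<in> Bset {p, q}"
  unfolding Bset_doubleton[OF assms]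
  by (intro exI[of _ "sgn (f p - f q)"]) (auto simp: abs_sgn_eq)

lemma sgn_segment_maximizes:
  fixes p q :: "'a::finite"
  assumes "p \<noteq> q" "b \<in> Bset {p, q}"
  shows "dotp b f \<le> dotp (\<lambda>z. sgn (f p - f q) * (\<delta> p z - \<delta> q z)) f"
proof -
  obtain s where s: "\<bar>s\<bar> \<le> 1" and b: "b = (\<lambda>z. s * (\<delta> p z - \<delta> q z))"
    using assms Bset_doubleton by blast
  have "s * (f p - f q) \<le> \<bar>s\<bar> * \<bar>f p - f q\<bar>"
    by (metis abs_ge_self abs_mult)
  also have "\<dots> \<le> \<bar>f p - f q\<bar>"
    using s by (simp add: mult_left_le_one_le)
  finally show ?thesis
    unfolding b dotp_segment by (simp add: abs_sgn mult.commute)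
qed

text \<open>On a two-point hyperedge the maximizer is unique unless \<open>f p = f q\<close>, where its term
  vanishes anyway; hence the set-valued Laplacian of a graph is single-valued.\<close>

lemma segment_maximizer_term:
  fixes p q :: "'a::finite"
  assumes pq: "p \<noteq> q" and b: "b \<in> Bset {p, q}"
    and max: "\<forall>b'\<in>Bset {p, q}. dotp b' f \<le> dotp b f"
  shows "b z * dotp b f = (\<delta> p z - \<delta> q z) * (f p - f q)"
proof -
  obtain s where s: "\<bar>s\<bar> \<le> 1" and b: "b = (\<lambda>z. s * (\<delta> p z - \<delta> q z))"
    using b Bset_doubleton[OF pq] by blast
  have "dotp (\<lambda>z. sgn (f p - f q) * (\<delta> p z - \<delta> q z)) f \<le> dotp b f"
    using max sgn_segment_in_Bset[OF pq, of f] unfolding b by blast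
  then have ge: "\<bar>f p - f q\<bar> \<le> s * (f p - f q)"
    unfolding b dotp_segment by (simp add: abs_sgn mult.commute)
  show ?thesis
  proof (cases "f p = f q")
    case True
    then show ?thesis
      unfolding b dotp_segment by simp
  next
    case False
    have "\<bar>f p - f q\<bar> \<le> \<bar>s\<bar> * \<bar>f p - f q\<bar>"
      using ge by (metis abs_ge_self abs_mult order.trans)
    then have "\<bar>s\<bar> = 1"
      using False s by simp
    then have "s * s = 1"
      by (metis abs_mult_self_eq mult_1)
    moreover have "s * r * (s * r') = (s * s) * (r * r')" for r r' :: real
      by (simp only: mult_ac)
    ultimately show ?thesis
      unfolding b dotp_segment by simp
  qed
qed

context connected_weighted_graph
begin

definition laplacian :: "('a \<Rightarrow> real) \<Rightarrow> 'a \<Rightarrow> real" where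
  "laplacian f z = (\<Sum>q\<in>UNIV. w z q * (f z - f q))"

lemma graph_hweight_edge: "adj w p q \<Longrightarrow> graph_hweight w {p, q} = w p q"
proof -
  assume pq: "adj w p q"
  have "\<exists>c x y. {p, q} = {x, y} \<and> x \<noteq> y \<and> c = w x y"
    using adj_neq[OF pq] by blast
  then have "\<exists>x y. {p, q} = {x, y} \<and> x \<noteq> y \<and> graph_hweight w {p, q} = w x y"
    unfolding graph_hweight_def by (rule someI_ex)
  then show ?thesis
    using weight_commute by (auto simp: doubleton_eq_iff)
qed

definition edge_maximizers :: "('a \<Rightarrow> real) \<Rightarrow> ('a set \<Rightarrow> 'a \<Rightarrow> real) set" where
  "edge_maximizers f =
     {b. \<forall>e\<in>graph_hyperedges w. b e \<in> Bset e \<and> (\<forall>b'\<in>Bset e. dotp b' f \<le> dotp (b e) f)}"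

lemma edge_maximizer_term:
  assumes "b \<in> edge_maximizers f" "adj w p q"
  shows "graph_hweight w {p, q} * b {p, q} z * dotp (b {p, q}) f
    = w p q * (\<delta> p z - \<delta> q z) * (f p - f q)"
proof -
  have "{p, q} \<in> graph_hyperedges w"
    using assms(2) unfolding graph_hyperedges_def by blast
  then show ?thesis
    using assms segment_maximizer_term[OF adj_neq[OF assms(2)], of "b {p, q}" f z]
    unfolding edge_maximizers_def by (simp add: graph_hweight_edge mult.assoc)
qed

lemma sum_edge_maximizers:
  assumes b: "b \<in> edge_maximizers f"
  shows "(\<Sum>e\<in>graph_hyperedges w. graph_hweight w e * b e z * dotp (b e) f) = laplacian f z"
proof -
  let ?T = "\<lambda>e. graph_hweight w e * b e z * dotp (b e) f"
  let ?N = "{q. adj w z q}"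
  have "(\<Sum>e\<in>graph_hyperedges w. ?T e) = (\<Sum>e\<in>{e\<in>graph_hyperedges w. z \<in> e}. ?T e)"
  proof (rule sum.mono_neutral_right)
    show "\<forall>e\<in>graph_hyperedges w - {e\<in>graph_hyperedges w. z \<in> e}. ?T e = 0"
    proof
      fix e
      assume e: "e \<in> graph_hyperedges w - {e\<in>graph_hyperedges w. z \<in> e}"
      obtain p q where "e = {p, q}" "adj w p q" "z \<noteq> p" "z \<noteq> q"
        using e unfolding graph_hyperedges_def by blast
      then show "?T e = 0"
        using edge_maximizer_term[OF b, of p q z] by (simp add: indic_def)
    qed
  qed auto
  also have "{e\<in>graph_hyperedges w. z \<in> e} = (\<lambda>q. {z, q}) ` ?N"
    unfolding graph_hyperedges_def by (auto simp: insert_commute intro: adj_commute)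
  also have "(\<Sum>e\<in>(\<lambda>q. {z, q}) ` ?N. ?T e) = (\<Sum>q\<in>?N. w z q * (f z - f q))"
  proof (rule sum.reindex_cong)
    show "inj_on (\<lambda>q. {z, q}) ?N"
      by (rule inj_onI) (auto simp: doubleton_eq_iff dest: adj_neq)
    show "?T {z, q} = w z q * (f z - f q)" if "q \<in> ?N" for q
      using edge_maximizer_term[OF b, of z q z] that adj_neq[of z q] by (simp add: indic_def)
  qed simp
  also have "\<dots> = laplacian f z"
    unfolding laplacian_def
    by (rule sum.mono_neutral_left) (auto simp: adj_def less_le weight_nonneg)
  finally show ?thesis .
qed

lemma edge_maximizers_nonempty: "edge_maximizers f \<noteq> {}"
proof -
  have "\<forall>e\<in>graph_hyperedges w. \<exists>b. b \<in> Bset e \<and> (\<forall>b'\<in>Bset e. dotp b' f \<le> dotp b f)"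
    unfolding graph_hyperedges_def
    by (blast dest: adj_neq intro: sgn_segment_in_Bset sgn_segment_maximizes)
  then obtain b where "\<forall>e\<in>graph_hyperedges w. b e \<in> Bset e \<and> (\<forall>b'\<in>Bset e. dotp b' f \<le> dotp (b e) f)"
    by (rule bchoice[elim_format]) blast
  then show ?thesis
    unfolding edge_maximizers_def by blast
qed

lemma hyp_laplacian_graph:
  "hyp_laplacian (graph_hyperedges w) (graph_hweight w) f = {laplacian f}"
proof -
  have "hyp_laplacian (graph_hyperedges w) (graph_hweight w) f
      = (\<lambda>b z. \<Sum>e\<in>graph_hyperedges w. graph_hweight w e * b e z * dotp (b e) f) ` edge_maximizers f"
    unfolding hyp_laplacian_def edge_maximizers_def by blast
  also have "\<dots> = (\<lambda>_. laplacian f) ` edge_maximizers f"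
    using sum_edge_maximizers by (intro image_cong) auto
  finally show ?thesis
    using edge_maximizers_nonempty by (simp add: image_constant_conv)
qed

section \<open>The resolvent of the random walk\<close>

definition transition :: "('a \<Rightarrow> real) \<Rightarrow> 'a \<Rightarrow> real" where
  "transition h z = (\<Sum>q\<in>UNIV. w z q / deg w z * h q)"

text \<open>\<open>id_plus_lap \<lambda>\<close> is \<open>I + \<lambda>(I - P)\<close> for the random-walk matrix \<open>P = D\<^sup>-\<^sup>1 A\<close>, which is
  conjugate to \<open>I + \<lambda>\<L>\<close> under \<open>D\<close>.\<close>

definition id_plus_lap :: "real \<Rightarrow> ('a \<Rightarrow> real) \<Rightarrow> 'a \<Rightarrow> real" where
  "id_plus_lap lam h z = h z + lam * (h z - transition h z)"

definition rw_resolvent :: "real \<Rightarrow> ('a \<Rightarrow> real) \<Rightarrow> 'a \<Rightarrow> real" where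
  "rw_resolvent lam g = (THE h. \<forall>z. id_plus_lap lam h z = g z)"

lemma sum_transition_weights: "(\<Sum>q\<in>UNIV. w z q / deg w z) = 1"
  using deg_neq_0[of z] unfolding deg_def by (simp add: sum_divide_distrib[symmetric])

lemma transition_linear: "transition (\<lambda>z. a * h1 z + b * h2 z) q = a * transition h1 q + b * transition h2 q"
  unfolding transition_def by (simp add: algebra_simps sum.distrib sum_distrib_left)

lemma transition_const: "transition (\<lambda>_. c) z = c"
proof -
  have "transition (\<lambda>_. c) z = (\<Sum>q\<in>UNIV. w z q / deg w z) * c"
    unfolding transition_def by (rule sum_distrib_right[symmetric])
  then show ?thesis
    by (simp add: sum_transition_weights)
qed

lemma transition_add_const: "transition (\<lambda>z. h z + c) q = transition h q + c"
  using transition_linear[of 1 h c "\<lambda>_. 1" q] transition_const[of 1 q] by simp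

lemma transition_le:
  assumes "\<And>q. h q \<le> B"
  shows "transition h z \<le> B"
proof -
  have "transition h z \<le> transition (\<lambda>_. B) z"
    unfolding transition_def using assms deg_pos[of z] weight_nonneg
    by (intro sum_mono mult_left_mono) auto
  then show ?thesis
    by (simp add: transition_const)
qed

lemma transition_abs_le: "(\<And>q. \<bar>h q\<bar> \<le> B) \<Longrightarrow> \<bar>transition h z\<bar> \<le> B"
  using transition_le[of h B z] transition_le[of "\<lambda>q. (-1) * h q + 0 * h q" B z]
  unfolding transition_linear by (simp add: abs_le_iff)

lemma laplacian_eq_deg_transition: "laplacian h z = deg w z * (h z - transition h z)"
proof -
  have "laplacian h z = deg w z * h z - (\<Sum>q\<in>UNIV. w z q * h q)"
    unfolding laplacian_def deg_def by (simp add: right_diff_distrib sum_subtractf sum_distrib_right)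
  moreover have "deg w z * transition h z = (\<Sum>q\<in>UNIV. w z q * h q)"
    unfolding transition_def using deg_neq_0[of z] by (simp add: sum_distrib_left)
  ultimately show ?thesis
    by (simp add: right_diff_distrib)
qed

lemma id_plus_lap_linear:
  "id_plus_lap lam (\<lambda>z. a * h1 z + b * h2 z) q = a * id_plus_lap lam h1 q + b * id_plus_lap lam h2 q"
  unfolding id_plus_lap_def transition_linear by (simp add: algebra_simps)

lemma id_plus_lap_add_const: "id_plus_lap lam (\<lambda>z. h z + c) q = id_plus_lap lam h q + c"
  unfolding id_plus_lap_def transition_add_const by (simp add: algebra_simps)

text \<open>At a maximum point \<open>z\<^sub>0\<close> of \<open>h\<close> we have \<open>P h z\<^sub>0 \<le> h z\<^sub>0\<close>.\<close>

lemma id_plus_lap_max_principle: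
  assumes lam: "0 \<le> lam" and B: "\<And>z. id_plus_lap lam h z \<le> B"
  shows "h z \<le> B"
proof -
  have "Max (range h) \<in> range h"
    by (rule Max_in) auto
  then obtain z0 where z0: "h z0 = Max (range h)"
    by (metis imageE)
  have max: "h q \<le> h z0" for q
    unfolding z0 by (rule Max_ge) auto
  have "h z0 \<le> id_plus_lap lam h z0"
    unfolding id_plus_lap_def using lam transition_le[of h "h z0" z0] max by simp
  then show ?thesis
    using B[of z0] max[of z] by linarith
qed

lemma id_plus_lap_min_principle:
  assumes lam: "0 \<le> lam" and B: "\<And>z. B \<le> id_plus_lap lam h z"
  shows "B \<le> h z"
  using id_plus_lap_max_principle[OF lam, of "\<lambda>z. (-1) * h z + 0 * h z" "- B" z] B
  unfolding id_plus_lap_linear by simp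

lemma id_plus_lap_inj:
  assumes lam: "0 \<le> lam" and eq: "\<And>z. id_plus_lap lam h1 z = id_plus_lap lam h2 z"
  shows "h1 = h2"
proof
  fix z
  have zero: "id_plus_lap lam (\<lambda>z. 1 * h1 z + (-1) * h2 z) z' = 0" for z'
    unfolding id_plus_lap_linear using eq by simp
  have "1 * h1 z + (-1) * h2 z \<le> 0"
    by (rule id_plus_lap_max_principle[OF lam]) (use zero in simp)
  moreover have "0 \<le> 1 * h1 z + (-1) * h2 z"
    by (rule id_plus_lap_min_principle[OF lam]) (use zero in simp)
  ultimately show "h1 z = h2 z"
    by simp
qed

lemma id_plus_lap_surj:
  assumes lam: "0 \<le> lam"
  shows "\<exists>h. \<forall>z. id_plus_lap lam h z = g z"
proof -
  define F where "F v = (\<chi> z. id_plus_lap lam (\<lambda>z. v$z) z)" for v :: "real^'a"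
  have "linear F"
  proof (rule linearI)
    fix v1 v2 v :: "real^'a" and r
    have add: "(\<lambda>z. (v1 + v2)$z) = (\<lambda>z. 1 * v1$z + 1 * v2$z)"
      by simp
    show "F (v1 + v2) = F v1 + F v2"
      unfolding F_def add id_plus_lap_linear by (simp add: vec_eq_iff)
    have scale: "(\<lambda>z. (r *\<^sub>R v)$z) = (\<lambda>z. r * v$z + 0 * v$z)"
      by simp
    show "F (r *\<^sub>R v) = r *\<^sub>R F v"
      unfolding F_def scale id_plus_lap_linear by (simp add: vec_eq_iff)
  qed
  moreover have "inj F"
  proof (rule injI)
    fix v1 v2
    assume "F v1 = F v2"
    then have "(\<lambda>z. v1$z) = (\<lambda>z. v2$z)"
      unfolding F_def by (intro id_plus_lap_inj[OF lam]) (simp add: vec_eq_iff)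
    then show "v1 = v2"
      by (simp add: vec_eq_iff fun_eq_iff)
  qed
  ultimately have "surj F"
    by (rule linear_inj_imp_surj)
  then obtain v where "F v = (\<chi> z. g z)"
    by (metis surjD)
  then show ?thesis
    unfolding F_def by (auto simp: vec_eq_iff)
qed

lemma id_plus_lap_rw_resolvent:
  assumes lam: "0 \<le> lam"
  shows "id_plus_lap lam (rw_resolvent lam g) z = g z"
proof -
  obtain h where h: "\<forall>z. id_plus_lap lam h z = g z"
    using id_plus_lap_surj[OF lam] by blast
  have "rw_resolvent lam g = h"
    unfolding rw_resolvent_def by (rule the_equality) (use h id_plus_lap_inj[OF lam] in auto)
  then show ?thesis
    using h by simp
qed

lemma rw_resolvent_eqI:
  "0 \<le> lam \<Longrightarrow> (\<And>z. id_plus_lap lam h z = g z) \<Longrightarrow> rw_resolvent lam g = h"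
  using id_plus_lap_inj[of lam "rw_resolvent lam g" h] id_plus_lap_rw_resolvent[of lam g] by simp

lemma rw_resolvent_add_const:
  "0 \<le> lam \<Longrightarrow> rw_resolvent lam (\<lambda>z. g z + c) = (\<lambda>z. rw_resolvent lam g z + c)"
  by (rule rw_resolvent_eqI) (simp_all add: id_plus_lap_add_const id_plus_lap_rw_resolvent)

lemma rw_resolvent_abs_le:
  assumes lam: "0 \<le> lam" and M: "\<And>z. \<bar>g z\<bar> \<le> M"
  shows "\<bar>rw_resolvent lam g z\<bar> \<le> M"
proof -
  have bounds: "g z' \<le> M" "- M \<le> g z'" for z'
    using M[of z'] by (simp_all add: abs_le_iff)
  have "rw_resolvent lam g z \<le> M"
    by (rule id_plus_lap_max_principle[OF lam]) (simp add: id_plus_lap_rw_resolvent[OF lam] bounds)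
  moreover have "- M \<le> rw_resolvent lam g z"
    by (rule id_plus_lap_min_principle[OF lam]) (simp add: id_plus_lap_rw_resolvent[OF lam] bounds)
  ultimately show ?thesis
    by simp
qed

text \<open>Writing \<open>h\<close> for the resolvent of \<open>g\<close>, the error is exactly \<open>\<lambda>\<^sup>2(I - P)\<^sup>2 h\<close>, and
  \<open>I - P\<close> at most doubles the sup norm.\<close>

lemma rw_resolvent_expansion:
  assumes lam: "0 \<le> lam" and M: "\<And>z. \<bar>g z\<bar> \<le> M"
  shows "\<bar>rw_resolvent lam g z - ((1 - lam) * g z + lam * transition g z)\<bar> \<le> 4 * lam\<^sup>2 * M"
proof -
  define h where "h = rw_resolvent lam g"
  define D1 where "D1 z = h z - transition h z" for z
  define D2 where "D2 z = D1 z - transition D1 z" for z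
  have hM: "\<bar>h q\<bar> \<le> M" for q
    unfolding h_def using rw_resolvent_abs_le[OF lam M] .
  have D1M: "\<bar>D1 q\<bar> \<le> 2 * M" for q
    using hM[of q] transition_abs_le[of h M q, OF hM] unfolding D1_def by simp
  have D2M: "\<bar>D2 q\<bar> \<le> 4 * M" for q
    using D1M[of q] transition_abs_le[of D1 "2 * M" q, OF D1M] unfolding D2_def by simp
  have g: "g = (\<lambda>z. 1 * h z + lam * D1 z)"
    using id_plus_lap_rw_resolvent[OF lam, of g] unfolding h_def id_plus_lap_def D1_def
    by (simp add: fun_eq_iff)
  have Pg: "transition g z = transition h z + lam * transition D1 z"
    using transition_linear[of 1 h lam D1 z] by (subst g) simp
  have gz: "g z = h z + lam * D1 z"
    by (subst g) simp
  have "h z - ((1 - lam) * g z + lam * transition g z) = lam\<^sup>2 * D2 z"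
    unfolding Pg gz D2_def by (simp add: D1_def algebra_simps power2_eq_square)
  moreover have "lam\<^sup>2 * \<bar>D2 z\<bar> \<le> lam\<^sup>2 * (4 * M)"
    using D2M by (intro mult_left_mono) auto
  ultimately show ?thesis
    unfolding h_def by (simp add: abs_mult)
qed

lemma graph_resolvent_eq:
  assumes lam: "0 \<le> lam"
  shows "graph_resolvent w lam f = (\<lambda>z. deg w z * rw_resolvent lam (\<lambda>z. f z / deg w z) z)"
proof -
  have "u z + lam * laplacian (\<lambda>x. u x / deg w x) z
      = deg w z * id_plus_lap lam (\<lambda>x. u x / deg w x) z" for u z
    unfolding laplacian_eq_deg_transition id_plus_lap_def using deg_neq_0[of z]
    by (simp add: algebra_simps)
  then have resolvent_eqn: "(\<exists>g\<in>norm_laplacian (graph_hyperedges w) (graph_hweight w) (deg w) u.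
        f = (\<lambda>z. u z + lam * g z))
      \<longleftrightarrow> (\<forall>z. id_plus_lap lam (\<lambda>z. u z / deg w z) z = f z / deg w z)" for u
    unfolding norm_laplacian_def hyp_laplacian_graph using deg_neq_0
    by (auto simp: fun_eq_iff field_simps)
  show ?thesis
    unfolding graph_resolvent_def resolvent_def resolvent_eqn
  proof (rule the_equality)
    show "\<forall>z. id_plus_lap lam (\<lambda>z. deg w z * rw_resolvent lam (\<lambda>z. f z / deg w z) z / deg w z) z
        = f z / deg w z"
      using deg_neq_0 id_plus_lap_rw_resolvent[OF lam] by simp
  next
    fix u
    assume "\<forall>z. id_plus_lap lam (\<lambda>z. u z / deg w z) z = f z / deg w z"
    then have "rw_resolvent lam (\<lambda>z. f z / deg w z) = (\<lambda>z. u z / deg w z)"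
      by (intro rw_resolvent_eqI[OF lam]) simp
    then show "u = (\<lambda>z. deg w z * rw_resolvent lam (\<lambda>z. f z / deg w z) z)"
      using deg_neq_0 by (simp add: fun_eq_iff)
  qed
qed

section \<open>Lazy random walks\<close>

definition lazy_pairing :: "'a \<Rightarrow> 'a \<Rightarrow> real \<Rightarrow> ('a \<Rightarrow> real) \<Rightarrow> real" where
  "lazy_pairing x y a g = a * (g x - g y) + (1 - a) * (transition g x - transition g y)"

definition diam :: real where
  "diam = Max (range (\<lambda>(u, v). gdist w u v))"

lemma gdist_le_diam: "gdist w u v \<le> diam"
  unfolding diam_def by (rule Max_ge) auto

lemma diam_nonneg: "0 \<le> diam"
  using gdist_le_diam[of x x] gdist_self[of x] by simp

lemma mlazy_eq: "mlazy w a x z = a * \<delta> x z + (1 - a) * (w x z / deg w x)"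
  unfolding mlazy_def indic_def using weight_self by auto

lemma mlazy_nonneg: "0 \<le> a \<Longrightarrow> a \<le> 1 \<Longrightarrow> 0 \<le> mlazy w a x z"
  unfolding mlazy_eq indic_def using weight_nonneg deg_pos[of x] by auto

lemma sum_mlazy: "sum (mlazy w a x) UNIV = 1"
proof -
  have "sum (mlazy w a x) UNIV = a * (\<Sum>z\<in>UNIV. \<delta> x z) + (1 - a) * (\<Sum>z\<in>UNIV. w x z / deg w x)"
    unfolding mlazy_eq by (simp add: sum.distrib sum_distrib_left)
  then show ?thesis
    by (simp add: sum_indic sum_transition_weights)
qed

lemma pairing_mlazy: "pairing g (mlazy w a x) (mlazy w a y) = lazy_pairing x y a g"
proof -
  have "(\<Sum>z\<in>UNIV. g z * mlazy w a u z)
      = a * (\<Sum>z\<in>UNIV. g z * \<delta> u z) + (1 - a) * (\<Sum>z\<in>UNIV. w u z / deg w u * g z)" for u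
    unfolding mlazy_eq by (simp add: sum.distrib sum_distrib_left algebra_simps)
  then have "(\<Sum>z\<in>UNIV. g z * mlazy w a u z) = a * g u + (1 - a) * transition g u" for u
    unfolding transition_def by (simp add: sum_mult_indic)
  then show ?thesis
    unfolding pairing_def lazy_pairing_def right_diff_distrib sum_subtractf
    by (simp add: algebra_simps)
qed

lemma W1_mlazy_eq_Sup:
  "0 \<le> a \<Longrightarrow> a \<le> 1 \<Longrightarrow> W1 w (mlazy w a x) (mlazy w a y) = Sup (lazy_pairing x y a ` Lip1 w)"
  using W1_eq_Sup_pairing[of "mlazy w a x" "mlazy w a y"] mlazy_nonneg sum_mlazy
  by (simp add: pairing_mlazy)

lemma lazy_pairing_le_W1:
  "0 \<le> a \<Longrightarrow> a \<le> 1 \<Longrightarrow> g \<in> Lip1 w \<Longrightarrow> lazy_pairing x y a g \<le> W1 w (mlazy w a x) (mlazy w a y)"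
  using pairing_le_W1[of "mlazy w a x" "mlazy w a y" g] mlazy_nonneg sum_mlazy
  by (simp add: pairing_mlazy)

lemma winner_deg_scaled: "winner (deg w) (\<lambda>z. deg w z * H z) (\<delta> x - \<delta> y) = H x - H y"
proof -
  have "winner (deg w) (\<lambda>z. deg w z * H z) (\<delta> x - \<delta> y) = (\<Sum>z\<in>UNIV. H z * \<delta> x z - H z * \<delta> y z)"
    unfolding winner_def using deg_neq_0 by (intro sum.cong) (simp_all add: field_simps)
  also have "\<dots> = H x - H y"
    by (simp add: sum_subtractf sum_mult_indic)
  finally show ?thesis .
qed

lemma Lip1w_eq_image: "Lip1w w = (\<lambda>g z. deg w z * g z) ` Lip1 w"
proof (intro set_eqI iffI)
  fix f
  assume "f \<in> Lip1w w"
  show "f \<in> (\<lambda>g z. deg w z * g z) ` Lip1 w"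
  proof (rule image_eqI)
    show "(\<lambda>z. f z / deg w z) \<in> Lip1 w"
      using \<open>f \<in> Lip1w w\<close> unfolding Lip1w_def Lip1_def by simp
    show "f = (\<lambda>z. deg w z * (f z / deg w z))"
      using deg_neq_0 by (simp add: fun_eq_iff)
  qed
next
  fix f
  assume "f \<in> (\<lambda>g z. deg w z * g z) ` Lip1 w"
  then show "f \<in> Lip1w w"
    unfolding Lip1w_def Lip1_def using deg_neq_0 by auto
qed

lemma KD_eq_Sup:
  assumes "0 \<le> lam"
  shows "KD w lam x y = Sup ((\<lambda>g. rw_resolvent lam g x - rw_resolvent lam g y) ` Lip1 w)"
  unfolding KD_def Lip1w_eq_image image_image graph_resolvent_eq[OF assms] winner_deg_scaled
  using deg_neq_0 by simp

text \<open>Lipschitz functions may be normalised to vanish at \<open>x\<close>, which bounds them by \<open>diam\<close> and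
  makes the resolvent expansion uniform.\<close>

lemma resolvent_diff_approx:
  assumes lam: "0 \<le> lam" "lam \<le> 1" and g: "g \<in> Lip1 w"
  shows "\<bar>(rw_resolvent lam g x - rw_resolvent lam g y) - lazy_pairing x y (1 - lam) g\<bar>
    \<le> 8 * lam\<^sup>2 * diam"
proof -
  define g' where "g' z = g z + - g x" for z
  have shift_R: "rw_resolvent lam g x - rw_resolvent lam g y = rw_resolvent lam g' x - rw_resolvent lam g' y"
    unfolding g'_def rw_resolvent_add_const[OF lam(1)] by simp
  have shift_P: "lazy_pairing x y (1 - lam) g = lazy_pairing x y (1 - lam) g'"
    unfolding lazy_pairing_def g'_def transition_add_const by simp
  have "\<bar>g' z\<bar> \<le> diam" for z
  proof -
    have "\<bar>g z - g x\<bar> \<le> gdist w z x"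
      using g unfolding Lip1_def by blast
    then show ?thesis
      using gdist_le_diam[of z x] unfolding g'_def by simp
  qed
  then have err: "\<bar>rw_resolvent lam g' u - ((1 - lam) * g' u + lam * transition g' u)\<bar>
      \<le> 4 * lam\<^sup>2 * diam" for u
    by (rule rw_resolvent_expansion[OF lam(1)])
  have "(rw_resolvent lam g' x - rw_resolvent lam g' y) - lazy_pairing x y (1 - lam) g'
      = (rw_resolvent lam g' x - ((1 - lam) * g' x + lam * transition g' x))
        - (rw_resolvent lam g' y - ((1 - lam) * g' y + lam * transition g' y))"
    unfolding lazy_pairing_def by (simp add: algebra_simps)
  also have "\<bar>\<dots>\<bar> \<le> 4 * lam\<^sup>2 * diam + 4 * lam\<^sup>2 * diam"
    by (rule order.trans[OF abs_triangle_ineq4 add_mono[OF err err]])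
  also have "\<dots> = 8 * lam\<^sup>2 * diam"
    by simp
  finally show ?thesis
    unfolding shift_R shift_P by simp
qed

lemma KD_approx:
  assumes "0 \<le> lam" "lam \<le> 1"
  shows "\<bar>KD w lam x y - W1 w (mlazy w (1 - lam) x) (mlazy w (1 - lam) y)\<bar> \<le> 8 * lam\<^sup>2 * diam"
  unfolding KD_eq_Sup[OF assms(1)] W1_mlazy_eq_Sup[of "1 - lam", simplified, OF assms(2,1)]
proof (rule abs_Sup_image_diff_le)
  show "Lip1 w \<noteq> {}"
    using Lip1_zero by blast
  show "bdd_above (lazy_pairing x y (1 - lam) ` Lip1 w)"
    using lazy_pairing_le_W1[of "1 - lam"] assms
    by (intro bdd_aboveI[of _ "W1 w (mlazy w (1 - lam) x) (mlazy w (1 - lam) y)"]) auto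
qed (use resolvent_diff_approx assms in auto)

section \<open>Curvature as a limit\<close>

text \<open>For \<open>a \<le> b\<close> the lazy measure \<open>m\<^sub>x\<^sup>b\<close> is the mixture \<open>t m\<^sub>x\<^sup>a + (1 - t) \<delta>\<^sub>x\<close> with
  \<open>t = (1 - b)/(1 - a)\<close>, and the pairings with a test function interpolate accordingly.\<close>

lemma W1_mlazy_interpolate:
  assumes a: "0 < a" "a \<le> b" "b < 1"
  defines "t \<equiv> (1 - b) / (1 - a)"
  shows "W1 w (mlazy w b x) (mlazy w b y)
    \<le> t * W1 w (mlazy w a x) (mlazy w a y) + (1 - t) * gdist w x y"
proof -
  have t: "0 \<le> t" "t \<le> 1" "t * (1 - a) = 1 - b"
    unfolding t_def using a by auto
  have W1_b: "W1 w (mlazy w b x) (mlazy w b y) = Sup (lazy_pairing x y b ` Lip1 w)"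
    using a by (intro W1_mlazy_eq_Sup) auto
  show ?thesis
    unfolding W1_b
  proof (rule cSup_least)
    show "lazy_pairing x y b ` Lip1 w \<noteq> {}"
      using Lip1_zero by blast
  next
    fix v
    assume "v \<in> lazy_pairing x y b ` Lip1 w"
    then obtain g where g: "g \<in> Lip1 w" "v = lazy_pairing x y b g"
      by blast
    have b: "b = 1 - t * (1 - a)"
      using t(3) by simp
    have "lazy_pairing x y b g = t * lazy_pairing x y a g + (1 - t) * (g x - g y)"
      unfolding lazy_pairing_def b by (simp add: algebra_simps)
    also have "\<dots> \<le> t * W1 w (mlazy w a x) (mlazy w a y) + (1 - t) * gdist w x y"
      using t a lazy_pairing_le_W1[OF _ _ g(1), of a x y] Lip1_le[OF g(1), of x y]
      by (intro add_mono mult_left_mono) auto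
    finally show "v \<le> t * W1 w (mlazy w a x) (mlazy w a y) + (1 - t) * gdist w x y"
      using g(2) by simp
  qed
qed

definition kappa_ratio :: "'a \<Rightarrow> 'a \<Rightarrow> real \<Rightarrow> real" where
  "kappa_ratio x y a = kappa_alpha w a x y / (1 - a)"

lemma kappa_ratio_mono:
  assumes xy: "x \<noteq> y" and a: "0 < a" "a \<le> b" "b < 1"
  shows "kappa_ratio x y a \<le> kappa_ratio x y b"
proof -
  define t where "t = (1 - b) / (1 - a)"
  define D where "D = gdist w x y"
  have D: "0 < D"
    unfolding D_def using gdist_ge_1[OF xy] by simp
  have "W1 w (mlazy w b x) (mlazy w b y) / D
      \<le> (t * W1 w (mlazy w a x) (mlazy w a y) + (1 - t) * D) / D"
    using W1_mlazy_interpolate[OF a] D unfolding t_def D_def by (simp add: divide_right_mono)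
  also have "\<dots> = t * (W1 w (mlazy w a x) (mlazy w a y) / D) + (1 - t)"
    using D by (simp add: field_simps)
  finally have "t * kappa_alpha w a x y \<le> kappa_alpha w b x y"
    unfolding kappa_alpha_def D_def[symmetric] by (simp add: algebra_simps)
  then show ?thesis
    unfolding kappa_ratio_def t_def using a by (simp add: field_simps)
qed

lemma kappa_ratio_le:
  assumes xy: "x \<noteq> y" and a: "0 < a" "a < 1"
  shows "kappa_ratio x y a \<le> 1 + 2 * diam"
proof -
  define D where "D = gdist w x y"
  have D: "1 \<le> D"
    unfolding D_def using gdist_ge_1[OF xy] .
  define g where "g z = gdist w z y" for z
  have g: "g \<in> Lip1 w"
    unfolding Lip1_def g_def
    using gdist_triangle[of u y v for u v] gdist_triangle[of v y u for u v] gdist_commute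
    by (auto simp: abs_le_iff) (smt (verit))+
  have g_bound: "\<bar>g z\<bar> \<le> diam" for z
    unfolding g_def using gdist_le_diam gdist_nonneg by simp
  have "\<bar>transition g x - transition g y\<bar> \<le> diam + diam"
    by (rule order.trans[OF abs_triangle_ineq4
          add_mono[OF transition_abs_le[OF g_bound] transition_abs_le[OF g_bound]]])
  then have "(1 - a) * (- (2 * diam)) \<le> (1 - a) * (transition g x - transition g y)"
    using a by (intro mult_left_mono) (auto simp: abs_le_iff)
  then have "a * D - (1 - a) * (2 * diam) \<le> lazy_pairing x y a g"
    unfolding lazy_pairing_def D_def g_def gdist_self by simp
  also have "\<dots> \<le> W1 w (mlazy w a x) (mlazy w a y)"
    using lazy_pairing_le_W1[OF _ _ g] a by simp
  finally have "kappa_alpha w a x y \<le> 1 - (a * D - (1 - a) * (2 * diam)) / D"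
    unfolding kappa_alpha_def D_def[symmetric] using D by (simp add: divide_right_mono)
  also have "\<dots> = (1 - a) * (1 + 2 * diam / D)"
    using D by (simp add: field_simps)
  also have "\<dots> \<le> (1 - a) * (1 + 2 * diam)"
    using a D diam_nonneg by (intro mult_left_mono) (auto simp: divide_le_eq mult_le_cancel_left1)
  finally show ?thesis
    unfolding kappa_ratio_def using a by (simp add: divide_le_eq mult.commute)
qed

lemma tendsto_kappa_ratio:
  assumes "x \<noteq> y"
  shows "(kappa_ratio x y \<longlongrightarrow> Sup (kappa_ratio x y ` {0<..<1})) (at_left 1)"
proof -
  have "at (1::real) within ({..<1} \<inter> {0<..}) = at_left 1"
    by (rule at_within_nhd[where S="{0<..}"]) auto
  moreover have "{..<1} \<inter> {0<..} = {0<..<(1::real)}"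
    by auto
  ultimately show ?thesis
    using Lim_left_bound[of "{0<..}" 1 "kappa_ratio x y" "1 + 2 * diam"]
      kappa_ratio_mono[OF assms] kappa_ratio_le[OF assms] by auto
qed

lemma kappa_LLY_eq_Sup:
  "x \<noteq> y \<Longrightarrow> kappa_LLY w x y = Sup (kappa_ratio x y ` {0<..<1})"
  unfolding kappa_LLY_def kappa_ratio_def[symmetric]
  by (intro tendsto_Lim tendsto_kappa_ratio) auto

lemma tendsto_kappa_lambda_div:
  assumes xy: "x \<noteq> y"
  shows "((\<lambda>lam. kappa_lambda w lam x y / lam) \<longlongrightarrow> Sup (kappa_ratio x y ` {0<..<1})) (at_right 0)"
proof -
  define D where "D = gdist w x y"
  have D: "1 \<le> D"
    unfolding D_def using gdist_ge_1[OF xy] .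
  define err where
    "err lam = (W1 w (mlazy w (1 - lam) x) (mlazy w (1 - lam) y) - KD w lam x y) / (D * lam)" for lam
  have near: "eventually (\<lambda>lam. lam \<in> {0<..<1}) (at_right (0::real))"
    by (intro eventually_at_right_real) auto
  have "eventually (\<lambda>lam. norm (err lam) \<le> 8 * diam * lam) (at_right 0)"
    using near
  proof eventually_elim
    case (elim lam)
    then have "\<bar>err lam\<bar> \<le> 8 * lam\<^sup>2 * diam / (D * lam)"
      using KD_approx[of lam x y] D unfolding err_def
      by (simp add: abs_minus_commute divide_right_mono)
    also have "\<dots> \<le> 8 * diam * lam"
      using elim D diam_nonneg by (simp add: power2_eq_square divide_le_eq mult_le_cancel_left1)
    finally show ?case
      by simp
  qed
  moreover have "((\<lambda>lam. 8 * diam * lam) \<longlongrightarrow> 0) (at_right (0::real))"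
    by (auto intro!: tendsto_eq_intros)
  ultimately have "(err \<longlongrightarrow> 0) (at_right 0)"
    by (rule Lim_null_comparison)
  moreover have "filterlim (\<lambda>lam. 1 - lam) (at_left 1) (at_right (0::real))"
    unfolding filterlim_at using near by (auto intro!: tendsto_eq_intros elim: eventually_mono)
  then have "((\<lambda>lam. kappa_ratio x y (1 - lam)) \<longlongrightarrow> Sup (kappa_ratio x y ` {0<..<1})) (at_right 0)"
    using tendsto_kappa_ratio[OF xy] by (rule filterlim_compose[rotated])
  ultimately have "((\<lambda>lam. kappa_ratio x y (1 - lam) + err lam)
      \<longlongrightarrow> Sup (kappa_ratio x y ` {0<..<1}) + 0) (at_right 0)"
    by (intro tendsto_add)
  moreover have "eventually (\<lambda>lam. kappa_ratio x y (1 - lam) + err lam = kappa_lambda w lam x y / lam)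
      (at_right 0)"
    using near
  proof eventually_elim
    case (elim lam)
    then show ?case
      using D unfolding kappa_ratio_def err_def kappa_lambda_def kappa_alpha_def D_def[symmetric]
      by (simp add: field_simps)
  qed
  ultimately show ?thesis
    by (simp add: tendsto_cong)
qed

end

theorem mainTheorem13:
  fixes w :: "'a::finite \<Rightarrow> 'a \<Rightarrow> real" and x y :: 'a
  assumes "weighted_simple_graph w"
    and "connected_graph w"
    and "x \<noteq> y"
  shows "kappa_lower w x y = kappa_upper w x y \<and> kappa_upper w x y = ereal (kappa_LLY w x y)"
proof -
  interpret connected_weighted_graph w
    using assms by unfold_locales blast+
  have lim: "((\<lambda>lam. ereal (kappa_lambda w lam x y / lam)) \<longlongrightarrow> ereal (kappa_LLY w x y)) (at_right 0)"
    using tendsto_kappa_lambda_div[OF assms(3)] kappa_LLY_eq_Sup[OF assms(3)] by simp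
  have "kappa_lower w x y = ereal (kappa_LLY w x y)"
    unfolding kappa_lower_def by (rule lim_imp_Liminf[OF _ lim]) simp
  moreover have "kappa_upper w x y = ereal (kappa_LLY w x y)"
    unfolding kappa_upper_def by (rule lim_imp_Limsup[OF _ lim]) simp
  ultimately show ?thesis
    by simp
qed

end
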